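(* Let $H$ be a weak Hopf algebra and $\pi\colon H\to A$ a partial representation of $H$ in an algebra $A$. The following are equivalent: (1) $\pi(h_1)\pi(S(h_2))=\pi(h_1S(h_2))=\pi(\varepsilon_t(h))$ for all $h\in H$; (2) $\pi(S(h_1))\pi(h_2)=\pi(S(h_1)h_2)=\pi(\varepsilon_s(h))$ for all $h\in H$; (3) $\pi$ is a representation, i.e. an algebra morphism.
   Context: All algebras are associative and unital over a field $\Bbbk$; Sweedler notation $\Delta(h)=h_1\otimes h_2$, $\Delta(1_H)=1_1\otimes1_2$. A weak Hopf algebra is $(H,m,u,\Delta,\varepsilon,S)$ with $H$ an algebra, $(H,\Delta,\varepsilon)$ a coalgebra, and for all $g,h,k$: $\Delta(kh)=\Delta(k)\Delta(h)$; $\varepsilon(kh_1)\varepsilon(h_2g)=\varepsilon(khg)=\varepsilon(kh_2)\varepsilon(h_1g)$; $(1\otimes\Delta(1))(\Delta(1)\otimes1)=\Delta^2(1)=(\Delta(1)\otimes1)(1\otimes\Delta(1))$; $h_1S(h_2)=\varepsilon_t(h)$; $S(h_1)h_2=\varepsilon_s(h)$; $S(h)=S(h_1)h_2S(h_3)$, where $\varepsilon_t(h)=\varepsilon(1_1h)1_2$, $\varepsilon_s(h)=1_1\varepsilon(h1_2)$. A partial representation of $H$ in $A$ is a linear $\pi\colon H\to A$ with, for all $h,k$: (PR1) $\pi(1_H)=1_A$; (PR2) $\pi(h)\pi(k_1)\pi(S(k_2))=\pi(hk_1)\pi(S(k_2))$; (PR3) $\pi(h)\pi(S(k_1))\pi(k_2)=\pi(hS(k_1))\pi(k_2)$;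 (PR4) $\pi(h_1)\pi(S(h_2))\pi(k)=\pi(h_1)\pi(S(h_2)k)$; (PR5) $\pi(S(h_1))\pi(h_2)\pi(k)=\pi(S(h_1))\pi(h_2k)$; (PR6) $\pi(h)=\pi(h_1)\pi(S(h_2))\pi(h_3)$. *)

theory Defs
  imports Main "HOL.Vector_Spaces"
begin

text \<open>Tensors in H (x) H and H (x) H (x) H are represented by finite lists of pairs / triples
(finite sums of simple tensors).  Two such lists denote the same tensor iff they agree under
all products of linear functionals; for vector spaces over a field this is exactly equality
in the tensor product (the canonical map H(x)H -> (H* (x) H*)* is injective).
Sweedler sums of k-multilinear expressions are sums over these lists.\<close>

definition lin_fun :: "('k::field \<Rightarrow> 'h::ab_group_add \<Rightarrow> 'h) \<Rightarrow> ('h \<Rightarrow> 'k) \<Rightarrow> bool" where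
  "lin_fun sc f \<longleftrightarrow> (\<forall>x y. f (x + y) = f x + f y) \<and> (\<forall>c x. f (sc c x) = c * f x)"

definition lin_map :: "('k::field \<Rightarrow> 'h::ab_group_add \<Rightarrow> 'h) \<Rightarrow> ('k \<Rightarrow> 'b::ab_group_add \<Rightarrow> 'b)
    \<Rightarrow> ('h \<Rightarrow> 'b) \<Rightarrow> bool" where
  "lin_map sc sc' f \<longleftrightarrow> (\<forall>x y. f (x + y) = f x + f y) \<and> (\<forall>c x. f (sc c x) = sc' c (f x))"

definition algebra_over :: "('k::field \<Rightarrow> 'a::ring_1 \<Rightarrow> 'a) \<Rightarrow> bool" where
  "algebra_over sc \<longleftrightarrow> vector_space sc \<and>
     (\<forall>c x y. sc c (x * y) = sc c x * y \<and> sc c (x * y) = x * sc c y)"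

definition teq2 :: "('k::field \<Rightarrow> 'h::ab_group_add \<Rightarrow> 'h) \<Rightarrow> ('h \<times> 'h) list \<Rightarrow> ('h \<times> 'h) list \<Rightarrow> bool" where
  "teq2 sc xs ys \<longleftrightarrow> (\<forall>\<phi> \<psi>. lin_fun sc \<phi> \<and> lin_fun sc \<psi> \<longrightarrow>
     (\<Sum>(a,b)\<leftarrow>xs. \<phi> a * \<psi> b) = (\<Sum>(a,b)\<leftarrow>ys. \<phi> a * \<psi> b))"

definition teq3 :: "('k::field \<Rightarrow> 'h::ab_group_add \<Rightarrow> 'h) \<Rightarrow> ('h \<times> 'h \<times> 'h) list \<Rightarrow> ('h \<times> 'h \<times> 'h) list \<Rightarrow> bool" where
  "teq3 sc xs ys \<longleftrightarrow> (\<forall>\<phi> \<psi> \<chi>. lin_fun sc \<phi> \<and> lin_fun sc \<psi> \<and> lin_fun sc \<chi> \<longrightarrow>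
     (\<Sum>(a,b,c)\<leftarrow>xs. \<phi> a * \<psi> b * \<chi> c) = (\<Sum>(a,b,c)\<leftarrow>ys. \<phi> a * \<psi> b * \<chi> c))"

text \<open>(Delta (x) id) o Delta and (id (x) Delta) o Delta.\<close>
definition Delta2 :: "('h \<Rightarrow> ('h \<times> 'h) list) \<Rightarrow> 'h \<Rightarrow> ('h \<times> 'h \<times> 'h) list" where
  "Delta2 \<Delta> h = concat (map (\<lambda>(a,b). map (\<lambda>(c,d). (c,d,b)) (\<Delta> a)) (\<Delta> h))"

definition Delta2' :: "('h \<Rightarrow> ('h \<times> 'h) list) \<Rightarrow> 'h \<Rightarrow> ('h \<times> 'h \<times> 'h) list" where
  "Delta2' \<Delta> h = concat (map (\<lambda>(a,b). map (\<lambda>(c,d). (a,c,d)) (\<Delta> b)) (\<Delta> h))"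

definition eps_t :: "('k::field \<Rightarrow> 'h::ring_1 \<Rightarrow> 'h) \<Rightarrow> ('h \<Rightarrow> ('h \<times> 'h) list) \<Rightarrow> ('h \<Rightarrow> 'k) \<Rightarrow> 'h \<Rightarrow> 'h" where
  "eps_t sc \<Delta> \<epsilon> h = (\<Sum>(a,b)\<leftarrow>\<Delta> 1. sc (\<epsilon> (a * h)) b)"

definition eps_s :: "('k::field \<Rightarrow> 'h::ring_1 \<Rightarrow> 'h) \<Rightarrow> ('h \<Rightarrow> ('h \<times> 'h) list) \<Rightarrow> ('h \<Rightarrow> 'k) \<Rightarrow> 'h \<Rightarrow> 'h" where
  "eps_s sc \<Delta> \<epsilon> h = (\<Sum>(a,b)\<leftarrow>\<Delta> 1. sc (\<epsilon> (h * b)) a)"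

definition weak_hopf_algebra ::
  "('k::field \<Rightarrow> 'h::ring_1 \<Rightarrow> 'h) \<Rightarrow> ('h \<Rightarrow> ('h \<times> 'h) list) \<Rightarrow> ('h \<Rightarrow> 'k) \<Rightarrow> ('h \<Rightarrow> 'h) \<Rightarrow> bool" where
  "weak_hopf_algebra sc \<Delta> \<epsilon> S \<longleftrightarrow>
     algebra_over sc \<and>
     \<comment> \<open>coalgebra: Delta linear, coassociative, counital; eps linear\<close>
     (\<forall>x y. teq2 sc (\<Delta> (x + y)) (\<Delta> x @ \<Delta> y)) \<and>
     (\<forall>c x. teq2 sc (\<Delta> (sc c x)) (map (\<lambda>(a,b). (sc c a, b)) (\<Delta> x))) \<and>
     lin_fun sc \<epsilon> \<and>
     (\<forall>h. teq3 sc (Delta2 \<Delta> h) (Delta2' \<Delta> h)) \<and>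
     (\<forall>h. (\<Sum>(a,b)\<leftarrow>\<Delta> h. sc (\<epsilon> a) b) = h) \<and>
     (\<forall>h. (\<Sum>(a,b)\<leftarrow>\<Delta> h. sc (\<epsilon> b) a) = h) \<and>
     \<comment> \<open>Delta multiplicative\<close>
     (\<forall>k h. teq2 sc (\<Delta> (k * h)) (concat (map (\<lambda>(a,b). map (\<lambda>(c,d). (a * c, b * d)) (\<Delta> h)) (\<Delta> k)))) \<and>
     \<comment> \<open>weak multiplicativity of the counit\<close>
     (\<forall>k h g. (\<Sum>(a,b)\<leftarrow>\<Delta> h. \<epsilon> (k * a) * \<epsilon> (b * g)) = \<epsilon> (k * h * g) \<and>
              \<epsilon> (k * h * g) = (\<Sum>(a,b)\<leftarrow>\<Delta> h. \<epsilon> (k * b) * \<epsilon> (a * g))) \<and>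
     \<comment> \<open>weak comultiplicativity of the unit\<close>
     teq3 sc (concat (map (\<lambda>(a,b). map (\<lambda>(c,d). (c, a * d, b)) (\<Delta> 1)) (\<Delta> 1))) (Delta2 \<Delta> 1) \<and>
     teq3 sc (Delta2 \<Delta> 1) (concat (map (\<lambda>(a,b). map (\<lambda>(c,d). (a, b * c, d)) (\<Delta> 1)) (\<Delta> 1))) \<and>
     \<comment> \<open>antipode\<close>
     lin_map sc sc S \<and>
     (\<forall>h. (\<Sum>(a,b)\<leftarrow>\<Delta> h. a * S b) = eps_t sc \<Delta> \<epsilon> h) \<and>
     (\<forall>h. (\<Sum>(a,b)\<leftarrow>\<Delta> h. S a * b) = eps_s sc \<Delta> \<epsilon> h) \<and>
     (\<forall>h. S h = (\<Sum>(a,b,c)\<leftarrow>Delta2 \<Delta> h. S a * b * S c))"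

definition partial_rep ::
  "('k::field \<Rightarrow> 'h::ring_1 \<Rightarrow> 'h) \<Rightarrow> ('h \<Rightarrow> ('h \<times> 'h) list) \<Rightarrow> ('h \<Rightarrow> 'h)
   \<Rightarrow> ('k \<Rightarrow> 'a::ring_1 \<Rightarrow> 'a) \<Rightarrow> ('h \<Rightarrow> 'a) \<Rightarrow> bool" where
  "partial_rep sc \<Delta> S scA \<pi> \<longleftrightarrow>
     lin_map sc scA \<pi> \<and>
     \<pi> 1 = 1 \<and>
     (\<forall>h k. (\<Sum>(a,b)\<leftarrow>\<Delta> k. \<pi> h * \<pi> a * \<pi> (S b)) = (\<Sum>(a,b)\<leftarrow>\<Delta> k. \<pi> (h * a) * \<pi> (S b))) \<and>
     (\<forall>h k. (\<Sum>(a,b)\<leftarrow>\<Delta> k. \<pi> h * \<pi> (S a) * \<pi> b) = (\<Sum>(a,b)\<leftarrow>\<Delta> k. \<pi> (h * S a) * \<pi> b)) \<and>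
     (\<forall>h k. (\<Sum>(a,b)\<leftarrow>\<Delta> h. \<pi> a * \<pi> (S b) * \<pi> k) = (\<Sum>(a,b)\<leftarrow>\<Delta> h. \<pi> a * \<pi> (S b * k))) \<and>
     (\<forall>h k. (\<Sum>(a,b)\<leftarrow>\<Delta> h. \<pi> (S a) * \<pi> b * \<pi> k) = (\<Sum>(a,b)\<leftarrow>\<Delta> h. \<pi> (S a) * \<pi> (b * k))) \<and>
     (\<forall>h. \<pi> h = (\<Sum>(a,b,c)\<leftarrow>Delta2 \<Delta> h. \<pi> a * \<pi> (S b) * \<pi> c))"

definition is_representation ::
  "('k::field \<Rightarrow> 'h::ring_1 \<Rightarrow> 'h) \<Rightarrow> ('k \<Rightarrow> 'a::ring_1 \<Rightarrow> 'a) \<Rightarrow> ('h \<Rightarrow> 'a) \<Rightarrow> bool" where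
  "is_representation sc scA \<pi> \<longleftrightarrow>
     lin_map sc scA \<pi> \<and> \<pi> 1 = 1 \<and> (\<forall>h k. \<pi> (h * k) = \<pi> h * \<pi> k)"

end

(*
  By the antipode axioms h_1 S(h_2) = eps_t(h) and S(h_1) h_2 = eps_s(h), conditions (1) and (2) say
  pi(h_1) pi(S h_2) = pi(eps_t h) and pi(S h_1) pi(h_2) = pi(eps_s h); every representation satisfies both.
  Conversely, PR6 and PR5 give pi(h) pi(k) = pi(h_1) pi(S h_2) pi(h_3 k), which under (1) becomes
  pi(eps_t h_1) pi(h_2 k).  Weak multiplicativity of the counit yields the tensor identity
  eps_t(h_1) (x) h_2 k = eps_t((hk)_1) (x) (hk)_2, and running the same computation backwards for hk
  gives pi(hk).  Condition (2) is handled symmetrically with PR2 and eps_s.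

  Tensor identities are only ever tested by products of scalar functionals; they are applied to
  vector-valued multilinear maps by expanding all tensor factors in a basis of H.
*)
theory Submission
  imports Defs
begin

lemma sum_list_concat: "sum_list (concat xss) = sum_list (map sum_list xss)"
  by (induction xss) auto

lemma sum_list_Delta2:
  "(\<Sum>(a,b,c)\<leftarrow>Delta2 \<Delta> h. g a b c) = (\<Sum>(x,c)\<leftarrow>\<Delta> h. \<Sum>(a,b)\<leftarrow>\<Delta> x. g a b c)"
  by (simp add: Delta2_def sum_list_concat map_concat comp_def case_prod_beta')

lemma sum_list_Delta2':
  "(\<Sum>(a,b,c)\<leftarrow>Delta2' \<Delta> h. g a b c) = (\<Sum>(a,y)\<leftarrow>\<Delta> h. \<Sum>(b,c)\<leftarrow>\<Delta> y. g a b c)"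
  by (simp add: Delta2'_def sum_list_concat map_concat comp_def case_prod_beta')

lemma sum_list_pairs_add:
  "(\<Sum>(a,b)\<leftarrow>L. f a b + g a b) = (\<Sum>(a,b)\<leftarrow>L. f a b) + (\<Sum>(a,b)\<leftarrow>L. (g a b :: 'c::comm_monoid_add))"
  by (induction L) (auto simp: algebra_simps)

lemma sum_list_pairs_swap:
  "(\<Sum>(a,b)\<leftarrow>L. \<Sum>(c,d)\<leftarrow>M. f a b c d) = (\<Sum>(c,d)\<leftarrow>M. \<Sum>(a,b)\<leftarrow>L. (f a b c d :: 'e::comm_monoid_add))"
  by (induction L) (auto simp: sum_list_pairs_add)

lemma sum_list_pairs_mult_left:
  "y * (\<Sum>(a,b)\<leftarrow>L. f a b) = (\<Sum>(a,b)\<leftarrow>L. y * (f a b :: 'c::semiring_0))"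
  by (induction L) (auto simp: distrib_left)

lemma sum_list_pairs_mult_right:
  "(\<Sum>(a,b)\<leftarrow>L. f a b) * y = (\<Sum>(a,b)\<leftarrow>L. (f a b :: 'c::semiring_0) * y)"
  by (induction L) (auto simp: distrib_right)

lemma additive_sum_list_pairs:
  fixes F :: "'a::ab_group_add \<Rightarrow> 'b::ab_group_add"
  assumes "\<And>x y. F (x + y) = F x + F y"
  shows "F (\<Sum>(a,b)\<leftarrow>L. f a b) = (\<Sum>(a,b)\<leftarrow>L. F (f a b))"
proof -
  interpret additive F by standard (fact assms)
  show ?thesis by (induction L) (auto simp: add zero)
qed

lemma module_hom_sum_scale:
  assumes "module_hom s1 s2 f"
  shows "f (\<Sum>i\<in>I. s1 (c i) (v i)) = (\<Sum>i\<in>I. s2 (c i) (f (v i)))"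
proof -
  interpret module_hom s1 s2 f by fact
  show ?thesis by (simp add: sum scale)
qed

lemma (in vector_space) finite_coordinates:
  assumes "finite C"
  obtains F and r :: "'b \<Rightarrow> 'b \<Rightarrow> 'a"
  where "finite F" and "\<And>b. lin_fun scale (\<lambda>v. r v b)"
    and "\<And>v. v \<in> C \<Longrightarrow> (\<Sum>b\<in>F. scale (r v b) b) = v"
proof -
  obtain B where "independent B" "UNIV \<subseteq> span B"
    using basis_exists[of UNIV] by blast
  then have B: "independent B" "span B = UNIV"
    by auto
  define F where "F = (\<Union>v\<in>C. {b. representation B v b \<noteq> 0})"
  show thesis
  proof
    show "finite F"
      unfolding F_def using assms finite_representation by blast
    show "lin_fun scale (\<lambda>v. representation B v b)" for b
      using linear_representation[OF B] by (simp add: linear_iff lin_fun_def)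
    show "(\<Sum>b\<in>F. scale (representation B v b) b) = v" if "v \<in> C" for v
    proof -
      have "(\<Sum>b\<in>F. scale (representation B v b) b)
          = (\<Sum>b | representation B v b \<noteq> 0. scale (representation B v b) b)"
        using \<open>finite F\<close> that by (intro sum.mono_neutral_right) (auto simp: F_def)
      also have "\<dots> = v"
        using B by (intro sum_nonzero_representation_eq) auto
      finally show ?thesis .
    qed
  qed
qed

lemma teq2_sum_list_bilinear:
  fixes sc :: "'k::field \<Rightarrow> 'h::ab_group_add \<Rightarrow> 'h" and scV :: "'k \<Rightarrow> 'v::ab_group_add \<Rightarrow> 'v"
  assumes "teq2 sc xs ys"
    and lin1: "\<And>y. module_hom sc scV (\<lambda>x. g x y)" and lin2: "\<And>x. module_hom sc scV (g x)"
  shows "(\<Sum>(a,b)\<leftarrow>xs. g a b) = (\<Sum>(a,b)\<leftarrow>ys. g a b)"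
proof -
  interpret H: vector_space sc
    using lin2[of undefined] by (simp add: module_hom_iff module_iff_vector_space)
  interpret V: vector_space scV
    using lin2[of undefined] by (simp add: module_hom_iff module_iff_vector_space)
  define C where "C = fst ` set (xs @ ys) \<union> snd ` set (xs @ ys)"
  obtain F r where "finite F" and r_lin: "\<And>b. lin_fun sc (\<lambda>v. r v b)"
    and r_coord: "\<And>v. v \<in> C \<Longrightarrow> (\<Sum>b\<in>F. sc (r v b) b) = v"
    using H.finite_coordinates[of C] by (auto simp: C_def)
  have expand: "g u v = (\<Sum>i\<in>F. \<Sum>j\<in>F. scV (r u i * r v j) (g i j))" if "u \<in> C" "v \<in> C" for u v
  proof -
    have "g u v = g (\<Sum>i\<in>F. sc (r u i) i) (\<Sum>j\<in>F. sc (r v j) j)"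
      using r_coord that by simp
    also have "\<dots> = (\<Sum>i\<in>F. \<Sum>j\<in>F. scV (r u i * r v j) (g i j))"
      unfolding module_hom_sum_scale[OF lin1]
      by (simp add: module_hom_sum_scale[OF lin2] V.scale_sum_right mult.commute)
    finally show ?thesis .
  qed
  have sum_expand: "(\<Sum>(a,b)\<leftarrow>zs. g a b) = (\<Sum>i\<in>F. \<Sum>j\<in>F. scV (\<Sum>(a,b)\<leftarrow>zs. r a i * r b j) (g i j))"
    if "set zs \<subseteq> set (xs @ ys)" for zs
    using that
  proof (induction zs)
    case (Cons z zs)
    then have "fst z \<in> C" "snd z \<in> C"
      by (auto simp: C_def)
    with Cons show ?case
      by (auto simp: expand split_beta V.scale_left_distrib sum.distrib)
  qed simp
  have coeff: "(\<Sum>(a,b)\<leftarrow>xs. r a i * r b j) = (\<Sum>(a,b)\<leftarrow>ys. r a i * r b j)" for i j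
    using assms(1) r_lin unfolding teq2_def by blast
  have "(\<Sum>(a,b)\<leftarrow>xs. g a b) = (\<Sum>i\<in>F. \<Sum>j\<in>F. scV (\<Sum>(a,b)\<leftarrow>xs. r a i * r b j) (g i j))"
    by (rule sum_expand) simp
  also have "\<dots> = (\<Sum>(a,b)\<leftarrow>ys. g a b)"
    unfolding coeff by (rule sum_expand[symmetric]) simp
  finally show ?thesis .
qed

lemma teq3_sum_list_trilinear:
  fixes sc :: "'k::field \<Rightarrow> 'h::ab_group_add \<Rightarrow> 'h" and scV :: "'k \<Rightarrow> 'v::ab_group_add \<Rightarrow> 'v"
  assumes "teq3 sc xs ys"
    and lin1: "\<And>y z. module_hom sc scV (\<lambda>x. g x y z)"
    and lin2: "\<And>x z. module_hom sc scV (\<lambda>y. g x y z)"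
    and lin3: "\<And>x y. module_hom sc scV (g x y)"
  shows "(\<Sum>(a,b,c)\<leftarrow>xs. g a b c) = (\<Sum>(a,b,c)\<leftarrow>ys. g a b c)"
proof -
  interpret H: vector_space sc
    using lin3[of undefined] by (simp add: module_hom_iff module_iff_vector_space)
  interpret V: vector_space scV
    using lin3[of undefined] by (simp add: module_hom_iff module_iff_vector_space)
  define C where "C = fst ` set (xs @ ys) \<union> (fst \<circ> snd) ` set (xs @ ys) \<union> (snd \<circ> snd) ` set (xs @ ys)"
  obtain F r where "finite F" and r_lin: "\<And>b. lin_fun sc (\<lambda>v. r v b)"
    and r_coord: "\<And>v. v \<in> C \<Longrightarrow> (\<Sum>b\<in>F. sc (r v b) b) = v"
    using H.finite_coordinates[of C] by (auto simp: C_def)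
  have expand: "g u v w = (\<Sum>i\<in>F. \<Sum>j\<in>F. \<Sum>l\<in>F. scV (r u i * r v j * r w l) (g i j l))"
    if "u \<in> C" "v \<in> C" "w \<in> C" for u v w
  proof -
    have "g u v w = g (\<Sum>i\<in>F. sc (r u i) i) (\<Sum>j\<in>F. sc (r v j) j) (\<Sum>l\<in>F. sc (r w l) l)"
      using r_coord that by simp
    also have "\<dots> = (\<Sum>i\<in>F. \<Sum>j\<in>F. \<Sum>l\<in>F. scV (r u i * r v j * r w l) (g i j l))"
      unfolding module_hom_sum_scale[OF lin1] unfolding module_hom_sum_scale[OF lin2]
      by (simp add: module_hom_sum_scale[OF lin3] V.scale_sum_right mult_ac)
    finally show ?thesis .
  qed
  have sum_expand: "(\<Sum>(a,b,c)\<leftarrow>zs. g a b c)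
      = (\<Sum>i\<in>F. \<Sum>j\<in>F. \<Sum>l\<in>F. scV (\<Sum>(a,b,c)\<leftarrow>zs. r a i * r b j * r c l) (g i j l))"
    if "set zs \<subseteq> set (xs @ ys)" for zs
    using that
  proof (induction zs)
    case (Cons z zs)
    then have "fst z \<in> C" "fst (snd z) \<in> C" "snd (snd z) \<in> C"
      by (auto simp: C_def)
    with Cons show ?case
      by (auto simp: expand split_beta V.scale_left_distrib sum.distrib)
  qed simp
  have coeff: "(\<Sum>(a,b,c)\<leftarrow>xs. r a i * r b j * r c l) = (\<Sum>(a,b,c)\<leftarrow>ys. r a i * r b j * r c l)" for i j l
    using assms(1) r_lin unfolding teq3_def by blast
  have "(\<Sum>(a,b,c)\<leftarrow>xs. g a b c)
      = (\<Sum>i\<in>F. \<Sum>j\<in>F. \<Sum>l\<in>F. scV (\<Sum>(a,b,c)\<leftarrow>xs. r a i * r b j * r c l) (g i j l))"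
    by (rule sum_expand) simp
  also have "\<dots> = (\<Sum>(a,b,c)\<leftarrow>ys. g a b c)"
    unfolding coeff by (rule sum_expand[symmetric]) simp
  finally show ?thesis .
qed

locale weak_hopf =
  fixes sc :: "'k::field \<Rightarrow> 'h::ring_1 \<Rightarrow> 'h"
    and \<Delta> :: "'h \<Rightarrow> ('h \<times> 'h) list" and \<epsilon> :: "'h \<Rightarrow> 'k" and S :: "'h \<Rightarrow> 'h"
  assumes weak_hopf_algebra: "weak_hopf_algebra sc \<Delta> \<epsilon> S"
begin

lemma algebra_H: "algebra_over sc"
  using weak_hopf_algebra unfolding weak_hopf_algebra_def by blast

sublocale H: vector_space sc
  using algebra_H by (simp add: algebra_over_def)

lemma scale_mult_left: "sc c x * y = sc c (x * y)"
  and scale_mult_right: "x * sc c y = sc c (x * y)"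
  using algebra_H unfolding algebra_over_def by metis+

lemma eps_add: "\<epsilon> (x + y) = \<epsilon> x + \<epsilon> y"
  and eps_scale: "\<epsilon> (sc c x) = c * \<epsilon> x"
  using weak_hopf_algebra unfolding weak_hopf_algebra_def lin_fun_def by blast+

lemma antipode_add: "S (x + y) = S x + S y"
  and antipode_scale: "S (sc c x) = sc c (S x)"
  using weak_hopf_algebra unfolding weak_hopf_algebra_def lin_map_def by blast+

lemma counit_left: "(\<Sum>(a,b)\<leftarrow>\<Delta> h. sc (\<epsilon> a) b) = h"
  and counit_right: "(\<Sum>(a,b)\<leftarrow>\<Delta> h. sc (\<epsilon> b) a) = h"
  using weak_hopf_algebra unfolding weak_hopf_algebra_def by blast+

lemma eps_mult_weak: "\<epsilon> (k * h * g) = (\<Sum>(a,b)\<leftarrow>\<Delta> h. \<epsilon> (k * a) * \<epsilon> (b * g))"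
  using weak_hopf_algebra unfolding weak_hopf_algebra_def by metis

lemma antipode_eps_t: "(\<Sum>(a,b)\<leftarrow>\<Delta> h. a * S b) = eps_t sc \<Delta> \<epsilon> h"
  and antipode_eps_s: "(\<Sum>(a,b)\<leftarrow>\<Delta> h. S a * b) = eps_s sc \<Delta> \<epsilon> h"
  using weak_hopf_algebra unfolding weak_hopf_algebra_def by blast+

lemmas scale_sum_list_right = additive_sum_list_pairs[of "sc c" for c, OF H.scale_right_distrib]
lemmas scale_sum_list_left = additive_sum_list_pairs[of "\<lambda>c. sc c v" for v, OF H.scale_left_distrib]

lemmas linearity_simps = module_hom_iff H.module_axioms eps_add eps_scale antipode_add antipode_scale
  distrib_left distrib_right scale_mult_left scale_mult_right H.scale_left_distrib H.scale_right_distrib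
  sum_list_pairs_add scale_sum_list_right mult_ac

lemma sum_coassoc:
  fixes scV :: "'k \<Rightarrow> 'v::ab_group_add \<Rightarrow> 'v"
  assumes "\<And>y z. module_hom sc scV (\<lambda>x. g x y z)" "\<And>x z. module_hom sc scV (\<lambda>y. g x y z)"
    and "\<And>x y. module_hom sc scV (g x y)"
  shows "(\<Sum>(x,c)\<leftarrow>\<Delta> h. \<Sum>(a,b)\<leftarrow>\<Delta> x. g a b c) = (\<Sum>(a,y)\<leftarrow>\<Delta> h. \<Sum>(b,c)\<leftarrow>\<Delta> y. g a b c)"
proof -
  have "teq3 sc (Delta2 \<Delta> h) (Delta2' \<Delta> h)"
    using weak_hopf_algebra unfolding weak_hopf_algebra_def by blast
  from teq3_sum_list_trilinear[OF this assms] show ?thesis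
    by (simp only: sum_list_Delta2 sum_list_Delta2')
qed

lemma sum_comult_mult:
  fixes scV :: "'k \<Rightarrow> 'v::ab_group_add \<Rightarrow> 'v"
  assumes "\<And>y. module_hom sc scV (\<lambda>x. g x y)" "\<And>x. module_hom sc scV (g x)"
  shows "(\<Sum>(a,b)\<leftarrow>\<Delta> (h * k). g a b) = (\<Sum>(a,b)\<leftarrow>\<Delta> h. \<Sum>(c,d)\<leftarrow>\<Delta> k. g (a * c) (b * d))"
proof -
  have "teq2 sc (\<Delta> (h * k)) (concat (map (\<lambda>(a,b). map (\<lambda>(c,d). (a * c, b * d)) (\<Delta> k)) (\<Delta> h)))"
    using weak_hopf_algebra unfolding weak_hopf_algebra_def by blast
  from teq2_sum_list_bilinear[OF this assms] show ?thesis
    by (simp add: sum_list_concat map_concat comp_def case_prod_beta')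
qed

lemma eps_hit_mult_right:
  "(\<Sum>(a,b)\<leftarrow>\<Delta> (h * k). sc (\<epsilon> (u * a)) b) = (\<Sum>(a,b)\<leftarrow>\<Delta> h. sc (\<epsilon> (u * a)) b) * k"
proof -
  have comult_counit: "(\<Sum>(y,q)\<leftarrow>\<Delta> w. \<Sum>(c,d)\<leftarrow>\<Delta> k. sc (\<epsilon> (y * c)) (q * d)) = w * k" for w
  proof -
    have "(\<Sum>(a,b)\<leftarrow>\<Delta> (w * k). sc (\<epsilon> a) b) = (\<Sum>(y,q)\<leftarrow>\<Delta> w. \<Sum>(c,d)\<leftarrow>\<Delta> k. sc (\<epsilon> (y * c)) (q * d))"
      by (rule sum_comult_mult[where scV=sc]) (simp_all add: linearity_simps)
    then show ?thesis
      by (simp add: counit_left)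
  qed
  have weak: "(\<Sum>(c,d)\<leftarrow>\<Delta> k. sc (\<epsilon> (u * (a * c))) (b * d))
      = (\<Sum>(x,y)\<leftarrow>\<Delta> a. sc (\<epsilon> (u * x)) (\<Sum>(c,d)\<leftarrow>\<Delta> k. sc (\<epsilon> (y * c)) (b * d)))" for a b
  proof -
    have "(\<Sum>(c,d)\<leftarrow>\<Delta> k. sc (\<epsilon> (u * (a * c))) (b * d))
        = (\<Sum>(c,d)\<leftarrow>\<Delta> k. \<Sum>(x,y)\<leftarrow>\<Delta> a. sc (\<epsilon> (u * x)) (sc (\<epsilon> (y * c)) (b * d)))"
      by (simp add: mult.assoc[symmetric] eps_mult_weak scale_sum_list_left)
    also have "\<dots> = (\<Sum>(x,y)\<leftarrow>\<Delta> a. \<Sum>(c,d)\<leftarrow>\<Delta> k. sc (\<epsilon> (u * x)) (sc (\<epsilon> (y * c)) (b * d)))"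
      by (rule sum_list_pairs_swap)
    finally show ?thesis
      by (simp add: scale_sum_list_right)
  qed
  have "(\<Sum>(a,b)\<leftarrow>\<Delta> (h * k). sc (\<epsilon> (u * a)) b)
      = (\<Sum>(a,b)\<leftarrow>\<Delta> h. \<Sum>(c,d)\<leftarrow>\<Delta> k. sc (\<epsilon> (u * (a * c))) (b * d))"
    by (rule sum_comult_mult[where scV=sc]) (simp_all add: linearity_simps)
  also have "\<dots> = (\<Sum>(a,b)\<leftarrow>\<Delta> h. \<Sum>(x,y)\<leftarrow>\<Delta> a. sc (\<epsilon> (u * x)) (\<Sum>(c,d)\<leftarrow>\<Delta> k. sc (\<epsilon> (y * c)) (b * d)))"
    by (simp add: weak)
  also have "\<dots> = (\<Sum>(x,w)\<leftarrow>\<Delta> h. \<Sum>(y,b)\<leftarrow>\<Delta> w. sc (\<epsilon> (u * x)) (\<Sum>(c,d)\<leftarrow>\<Delta> k. sc (\<epsilon> (y * c)) (b * d)))"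
    by (rule sum_coassoc[where scV=sc]) (simp_all add: linearity_simps)
  also have "\<dots> = (\<Sum>(x,w)\<leftarrow>\<Delta> h. sc (\<epsilon> (u * x)) (w * k))"
    by (simp add: scale_sum_list_right[symmetric] comult_counit)
  also have "\<dots> = (\<Sum>(x,w)\<leftarrow>\<Delta> h. sc (\<epsilon> (u * x)) w) * k"
    by (simp add: sum_list_pairs_mult_right scale_mult_left)
  finally show ?thesis .
qed

lemma eps_hit_mult_left:
  "(\<Sum>(a,b)\<leftarrow>\<Delta> (h * k). sc (\<epsilon> (b * v)) a) = h * (\<Sum>(a,b)\<leftarrow>\<Delta> k. sc (\<epsilon> (b * v)) a)"
proof -
  have comult_counit: "(\<Sum>(c,p)\<leftarrow>\<Delta> z. \<Sum>(a,b)\<leftarrow>\<Delta> h. sc (\<epsilon> (b * p)) (a * c)) = h * z" for z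
  proof -
    have "(\<Sum>(a,b)\<leftarrow>\<Delta> (h * z). sc (\<epsilon> b) a) = (\<Sum>(a,b)\<leftarrow>\<Delta> h. \<Sum>(c,p)\<leftarrow>\<Delta> z. sc (\<epsilon> (b * p)) (a * c))"
      by (rule sum_comult_mult[where scV=sc]) (simp_all add: linearity_simps)
    then show ?thesis
      by (simp add: counit_right sum_list_pairs_swap[of _ "\<Delta> h"])
  qed
  have weak: "(\<Sum>(a,b)\<leftarrow>\<Delta> h. sc (\<epsilon> (b * d * v)) (a * c))
      = (\<Sum>(p,q)\<leftarrow>\<Delta> d. sc (\<epsilon> (q * v)) (\<Sum>(a,b)\<leftarrow>\<Delta> h. sc (\<epsilon> (b * p)) (a * c)))" for c d
  proof -
    have "(\<Sum>(a,b)\<leftarrow>\<Delta> h. sc (\<epsilon> (b * d * v)) (a * c))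
        = (\<Sum>(a,b)\<leftarrow>\<Delta> h. \<Sum>(p,q)\<leftarrow>\<Delta> d. sc (\<epsilon> (q * v)) (sc (\<epsilon> (b * p)) (a * c)))"
      by (simp add: eps_mult_weak scale_sum_list_left mult.commute)
    also have "\<dots> = (\<Sum>(p,q)\<leftarrow>\<Delta> d. \<Sum>(a,b)\<leftarrow>\<Delta> h. sc (\<epsilon> (q * v)) (sc (\<epsilon> (b * p)) (a * c)))"
      by (rule sum_list_pairs_swap)
    finally show ?thesis
      by (simp add: scale_sum_list_right)
  qed
  have "(\<Sum>(a,b)\<leftarrow>\<Delta> (h * k). sc (\<epsilon> (b * v)) a)
      = (\<Sum>(a,b)\<leftarrow>\<Delta> h. \<Sum>(c,d)\<leftarrow>\<Delta> k. sc (\<epsilon> (b * d * v)) (a * c))"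
    by (rule sum_comult_mult[where scV=sc]) (simp_all add: linearity_simps)
  also have "\<dots> = (\<Sum>(c,d)\<leftarrow>\<Delta> k. \<Sum>(a,b)\<leftarrow>\<Delta> h. sc (\<epsilon> (b * d * v)) (a * c))"
    by (rule sum_list_pairs_swap)
  also have "\<dots> = (\<Sum>(c,d)\<leftarrow>\<Delta> k. \<Sum>(p,q)\<leftarrow>\<Delta> d. sc (\<epsilon> (q * v)) (\<Sum>(a,b)\<leftarrow>\<Delta> h. sc (\<epsilon> (b * p)) (a * c)))"
    by (simp add: weak)
  also have "\<dots> = (\<Sum>(z,q)\<leftarrow>\<Delta> k. \<Sum>(c,p)\<leftarrow>\<Delta> z. sc (\<epsilon> (q * v)) (\<Sum>(a,b)\<leftarrow>\<Delta> h. sc (\<epsilon> (b * p)) (a * c)))"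
    by (rule sum_coassoc[where scV=sc, symmetric]) (simp_all add: linearity_simps)
  also have "\<dots> = (\<Sum>(z,q)\<leftarrow>\<Delta> k. sc (\<epsilon> (q * v)) (h * z))"
    by (simp add: scale_sum_list_right[symmetric] comult_counit)
  also have "\<dots> = h * (\<Sum>(z,q)\<leftarrow>\<Delta> k. sc (\<epsilon> (q * v)) z)"
    by (simp add: sum_list_pairs_mult_left scale_mult_right)
  finally show ?thesis .
qed

lemma eps_t_comult_mult_right:
  fixes scV :: "'k \<Rightarrow> 'v::ab_group_add \<Rightarrow> 'v"
  assumes lin1: "\<And>y. module_hom sc scV (\<lambda>x. \<beta> x y)" and lin2: "\<And>x. module_hom sc scV (\<beta> x)"
  shows "(\<Sum>(a,b)\<leftarrow>\<Delta> h. \<beta> (eps_t sc \<Delta> \<epsilon> a) (b * k)) = (\<Sum>(a,b)\<leftarrow>\<Delta> (h * k). \<beta> (eps_t sc \<Delta> \<epsilon> a) b)"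
proof -
  have sum1: "\<beta> (\<Sum>(a,b)\<leftarrow>L. f a b) y = (\<Sum>(a,b)\<leftarrow>L. \<beta> (f a b) y)" for L f y
    by (rule additive_sum_list_pairs[where F="\<lambda>x. \<beta> x y"]) (rule module_hom.add[OF lin1])
  have sum2: "\<beta> x (\<Sum>(a,b)\<leftarrow>L. f a b) = (\<Sum>(a,b)\<leftarrow>L. \<beta> x (f a b))" for L f x
    by (rule additive_sum_list_pairs) (rule module_hom.add[OF lin2])
  have expand: "(\<Sum>(a,b)\<leftarrow>\<Delta> g. \<beta> (eps_t sc \<Delta> \<epsilon> a) (f b))
      = (\<Sum>(u,v)\<leftarrow>\<Delta> 1. \<beta> v (\<Sum>(a,b)\<leftarrow>\<Delta> g. sc (\<epsilon> (u * a)) (f b)))" for g f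
  proof -
    have "(\<Sum>(a,b)\<leftarrow>\<Delta> g. \<beta> (eps_t sc \<Delta> \<epsilon> a) (f b))
        = (\<Sum>(a,b)\<leftarrow>\<Delta> g. \<Sum>(u,v)\<leftarrow>\<Delta> 1. \<beta> v (sc (\<epsilon> (u * a)) (f b)))"
      by (simp add: eps_t_def sum1 sum2
          module_hom.scale[OF lin1] module_hom.scale[OF lin2])
    also have "\<dots> = (\<Sum>(u,v)\<leftarrow>\<Delta> 1. \<Sum>(a,b)\<leftarrow>\<Delta> g. \<beta> v (sc (\<epsilon> (u * a)) (f b)))"
      by (rule sum_list_pairs_swap)
    finally show ?thesis
      by (simp add: sum2)
  qed
  have "(\<Sum>(a,b)\<leftarrow>\<Delta> h. sc (\<epsilon> (u * a)) (b * k)) = (\<Sum>(a,b)\<leftarrow>\<Delta> (h * k). sc (\<epsilon> (u * a)) b)" for u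
    by (simp add: eps_hit_mult_right sum_list_pairs_mult_right scale_mult_left)
  then show ?thesis
    using expand[of "\<lambda>b. b * k" h] expand[of "\<lambda>b. b" "h * k"] by simp
qed

lemma eps_s_comult_mult_left:
  fixes scV :: "'k \<Rightarrow> 'v::ab_group_add \<Rightarrow> 'v"
  assumes lin1: "\<And>y. module_hom sc scV (\<lambda>x. \<beta> x y)" and lin2: "\<And>x. module_hom sc scV (\<beta> x)"
  shows "(\<Sum>(a,b)\<leftarrow>\<Delta> k. \<beta> (h * a) (eps_s sc \<Delta> \<epsilon> b)) = (\<Sum>(a,b)\<leftarrow>\<Delta> (h * k). \<beta> a (eps_s sc \<Delta> \<epsilon> b))"
proof -
  have sum1: "\<beta> (\<Sum>(a,b)\<leftarrow>L. f a b) y = (\<Sum>(a,b)\<leftarrow>L. \<beta> (f a b) y)" for L f y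
    by (rule additive_sum_list_pairs[where F="\<lambda>x. \<beta> x y"]) (rule module_hom.add[OF lin1])
  have sum2: "\<beta> x (\<Sum>(a,b)\<leftarrow>L. f a b) = (\<Sum>(a,b)\<leftarrow>L. \<beta> x (f a b))" for L f x
    by (rule additive_sum_list_pairs) (rule module_hom.add[OF lin2])
  have expand: "(\<Sum>(a,b)\<leftarrow>\<Delta> g. \<beta> (f a) (eps_s sc \<Delta> \<epsilon> b))
      = (\<Sum>(u,v)\<leftarrow>\<Delta> 1. \<beta> (\<Sum>(a,b)\<leftarrow>\<Delta> g. sc (\<epsilon> (b * v)) (f a)) u)" for g f
  proof -
    have "(\<Sum>(a,b)\<leftarrow>\<Delta> g. \<beta> (f a) (eps_s sc \<Delta> \<epsilon> b))
        = (\<Sum>(a,b)\<leftarrow>\<Delta> g. \<Sum>(u,v)\<leftarrow>\<Delta> 1. \<beta> (sc (\<epsilon> (b * v)) (f a)) u)"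
      by (simp add: eps_s_def sum1 sum2
          module_hom.scale[OF lin1] module_hom.scale[OF lin2])
    also have "\<dots> = (\<Sum>(u,v)\<leftarrow>\<Delta> 1. \<Sum>(a,b)\<leftarrow>\<Delta> g. \<beta> (sc (\<epsilon> (b * v)) (f a)) u)"
      by (rule sum_list_pairs_swap)
    finally show ?thesis
      by (simp add: sum1)
  qed
  have "(\<Sum>(a,b)\<leftarrow>\<Delta> k. sc (\<epsilon> (b * v)) (h * a)) = (\<Sum>(a,b)\<leftarrow>\<Delta> (h * k). sc (\<epsilon> (b * v)) a)" for v
    by (simp add: eps_hit_mult_left sum_list_pairs_mult_left scale_mult_right)
  then show ?thesis
    using expand[of "\<lambda>a. h * a" k] expand[of "\<lambda>a. a" "h * k"] by simp
qed

end

locale weak_hopf_partial_rep = weak_hopf sc \<Delta> \<epsilon> S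
  for sc :: "'k::field \<Rightarrow> 'h::ring_1 \<Rightarrow> 'h" and \<Delta> \<epsilon> S +
  fixes scA :: "'k \<Rightarrow> 'a::ring_1 \<Rightarrow> 'a" and \<pi> :: "'h \<Rightarrow> 'a"
  assumes algebra_A: "algebra_over scA"
    and partial_rep: "partial_rep sc \<Delta> S scA \<pi>"
begin

sublocale A: vector_space scA
  using algebra_A by (simp add: algebra_over_def)

lemma scaleA_mult_left: "scA c x * y = scA c (x * y)"
  and scaleA_mult_right: "x * scA c y = scA c (x * y)"
  using algebra_A unfolding algebra_over_def by metis+

lemma pi_linear: "lin_map sc scA \<pi>"
  using partial_rep unfolding partial_rep_def by blast

lemma pi_add: "\<pi> (x + y) = \<pi> x + \<pi> y"
  and pi_scale: "\<pi> (sc c x) = scA c (\<pi> x)"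
  using pi_linear unfolding lin_map_def by blast+

lemma pi_one: "\<pi> 1 = 1"
  using partial_rep unfolding partial_rep_def by blast

lemma PR2:
  "(\<Sum>(a,b)\<leftarrow>\<Delta> k. \<pi> h * \<pi> a * \<pi> (S b)) = (\<Sum>(a,b)\<leftarrow>\<Delta> k. \<pi> (h * a) * \<pi> (S b))"
  using partial_rep unfolding partial_rep_def by blast

lemma PR5:
  "(\<Sum>(a,b)\<leftarrow>\<Delta> h. \<pi> (S a) * \<pi> b * \<pi> k) = (\<Sum>(a,b)\<leftarrow>\<Delta> h. \<pi> (S a) * \<pi> (b * k))"
  using partial_rep unfolding partial_rep_def by blast

lemma PR6: "\<pi> h = (\<Sum>(x,c)\<leftarrow>\<Delta> h. \<Sum>(a,b)\<leftarrow>\<Delta> x. \<pi> a * \<pi> (S b) * \<pi> c)"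
  using partial_rep unfolding partial_rep_def sum_list_Delta2 by blast

lemmas pi_sum_list = additive_sum_list_pairs[of \<pi>, OF pi_add]

lemmas rep_linearity_simps = linearity_simps A.module_axioms pi_add pi_scale
  scaleA_mult_left scaleA_mult_right A.scale_left_distrib A.scale_right_distrib

lemma module_hom_pi_mult:
  "module_hom sc scA (\<lambda>x. \<pi> x * \<pi> y)" "module_hom sc scA (\<lambda>y. \<pi> x * \<pi> y)"
  by (simp_all add: rep_linearity_simps)

lemma pi_mult_absorb_right:
  "\<pi> h * \<pi> k = (\<Sum>(x,c)\<leftarrow>\<Delta> h. \<Sum>(a,b)\<leftarrow>\<Delta> x. \<pi> a * \<pi> (S b) * \<pi> (c * k))"
proof -
  have "\<pi> h * \<pi> k = (\<Sum>(x,c)\<leftarrow>\<Delta> h. \<Sum>(a,b)\<leftarrow>\<Delta> x. \<pi> a * \<pi> (S b) * \<pi> c * \<pi> k)"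
    by (subst PR6[of h]) (simp add: sum_list_pairs_mult_right)
  also have "\<dots> = (\<Sum>(a,y)\<leftarrow>\<Delta> h. \<pi> a * (\<Sum>(b,c)\<leftarrow>\<Delta> y. \<pi> (S b) * \<pi> c * \<pi> k))"
    by (subst sum_coassoc[where scV=scA]) (simp_all add: rep_linearity_simps sum_list_pairs_mult_left mult.assoc)
  also have "\<dots> = (\<Sum>(a,y)\<leftarrow>\<Delta> h. \<pi> a * (\<Sum>(b,c)\<leftarrow>\<Delta> y. \<pi> (S b) * \<pi> (c * k)))"
    by (simp add: PR5)
  also have "\<dots> = (\<Sum>(x,c)\<leftarrow>\<Delta> h. \<Sum>(a,b)\<leftarrow>\<Delta> x. \<pi> a * \<pi> (S b) * \<pi> (c * k))"
    by (subst sum_coassoc[where scV=scA]) (simp_all add: rep_linearity_simps sum_list_pairs_mult_left mult.assoc)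
  finally show ?thesis .
qed

lemma pi_mult_absorb_left:
  "\<pi> h * \<pi> k = (\<Sum>(a,y)\<leftarrow>\<Delta> k. \<Sum>(b,c)\<leftarrow>\<Delta> y. \<pi> (h * a) * \<pi> (S b) * \<pi> c)"
proof -
  have "\<pi> h * \<pi> k = (\<Sum>(x,c)\<leftarrow>\<Delta> k. (\<Sum>(a,b)\<leftarrow>\<Delta> x. \<pi> h * \<pi> a * \<pi> (S b)) * \<pi> c)"
    by (subst PR6[of k]) (simp add: sum_list_pairs_mult_left sum_list_pairs_mult_right mult.assoc)
  also have "\<dots> = (\<Sum>(x,c)\<leftarrow>\<Delta> k. \<Sum>(a,b)\<leftarrow>\<Delta> x. \<pi> (h * a) * \<pi> (S b) * \<pi> c)"
    by (simp add: PR2 sum_list_pairs_mult_right)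
  also have "\<dots> = (\<Sum>(a,y)\<leftarrow>\<Delta> k. \<Sum>(b,c)\<leftarrow>\<Delta> y. \<pi> (h * a) * \<pi> (S b) * \<pi> c)"
    by (rule sum_coassoc[where scV=scA]) (simp_all add: rep_linearity_simps)
  finally show ?thesis .
qed

lemma PR6_regrouped: "\<pi> h = (\<Sum>(a,y)\<leftarrow>\<Delta> h. \<Sum>(b,c)\<leftarrow>\<Delta> y. \<pi> a * \<pi> (S b) * \<pi> c)"
  using pi_mult_absorb_left[of 1 h] by (simp add: pi_one)

lemma multiplicative_of_eps_t:
  assumes eps_t: "\<And>h. (\<Sum>(a,b)\<leftarrow>\<Delta> h. \<pi> a * \<pi> (S b)) = \<pi> (eps_t sc \<Delta> \<epsilon> h)"
  shows "\<pi> (h * k) = \<pi> h * \<pi> k"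
proof -
  have "\<pi> h * \<pi> k = (\<Sum>(x,c)\<leftarrow>\<Delta> h. (\<Sum>(a,b)\<leftarrow>\<Delta> x. \<pi> a * \<pi> (S b)) * \<pi> (c * k))"
    unfolding pi_mult_absorb_right[of h k] by (simp add: sum_list_pairs_mult_right)
  also have "\<dots> = (\<Sum>(x,c)\<leftarrow>\<Delta> h. \<pi> (eps_t sc \<Delta> \<epsilon> x) * \<pi> (c * k))"
    by (simp add: eps_t)
  also have "\<dots> = (\<Sum>(x,c)\<leftarrow>\<Delta> (h * k). \<pi> (eps_t sc \<Delta> \<epsilon> x) * \<pi> c)"
    by (rule eps_t_comult_mult_right) (rule module_hom_pi_mult)+
  also have "\<dots> = (\<Sum>(x,c)\<leftarrow>\<Delta> (h * k). (\<Sum>(a,b)\<leftarrow>\<Delta> x. \<pi> a * \<pi> (S b)) * \<pi> c)"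
    by (simp add: eps_t)
  also have "\<dots> = \<pi> (h * k)"
    by (subst PR6[of "h * k"]) (simp add: sum_list_pairs_mult_right)
  finally show ?thesis by (rule sym)
qed

lemma multiplicative_of_eps_s:
  assumes eps_s: "\<And>h. (\<Sum>(a,b)\<leftarrow>\<Delta> h. \<pi> (S a) * \<pi> b) = \<pi> (eps_s sc \<Delta> \<epsilon> h)"
  shows "\<pi> (h * k) = \<pi> h * \<pi> k"
proof -
  have "\<pi> h * \<pi> k = (\<Sum>(a,y)\<leftarrow>\<Delta> k. \<pi> (h * a) * (\<Sum>(b,c)\<leftarrow>\<Delta> y. \<pi> (S b) * \<pi> c))"
    unfolding pi_mult_absorb_left[of h k] by (simp add: sum_list_pairs_mult_left mult.assoc)
  also have "\<dots> = (\<Sum>(a,y)\<leftarrow>\<Delta> k. \<pi> (h * a) * \<pi> (eps_s sc \<Delta> \<epsilon> y))"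
    by (simp add: eps_s)
  also have "\<dots> = (\<Sum>(a,y)\<leftarrow>\<Delta> (h * k). \<pi> a * \<pi> (eps_s sc \<Delta> \<epsilon> y))"
    by (rule eps_s_comult_mult_left) (rule module_hom_pi_mult)+
  also have "\<dots> = (\<Sum>(a,y)\<leftarrow>\<Delta> (h * k). \<pi> a * (\<Sum>(b,c)\<leftarrow>\<Delta> y. \<pi> (S b) * \<pi> c))"
    by (simp add: eps_s)
  also have "\<dots> = \<pi> (h * k)"
    by (subst PR6_regrouped[of "h * k"]) (simp add: sum_list_pairs_mult_left mult.assoc)
  finally show ?thesis by (rule sym)
qed

lemma representation_iff_multiplicative:
  "is_representation sc scA \<pi> \<longleftrightarrow> (\<forall>h k. \<pi> (h * k) = \<pi> h * \<pi> k)"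
  using pi_linear pi_one by (simp add: is_representation_def)

lemma representation_iff_eps_t:
  "is_representation sc scA \<pi> \<longleftrightarrow> (\<forall>h. (\<Sum>(a,b)\<leftarrow>\<Delta> h. \<pi> a * \<pi> (S b)) = \<pi> (eps_t sc \<Delta> \<epsilon> h))"
  unfolding representation_iff_multiplicative
  using multiplicative_of_eps_t by (auto simp: antipode_eps_t[symmetric] pi_sum_list)

lemma representation_iff_eps_s:
  "is_representation sc scA \<pi> \<longleftrightarrow> (\<forall>h. (\<Sum>(a,b)\<leftarrow>\<Delta> h. \<pi> (S a) * \<pi> b) = \<pi> (eps_s sc \<Delta> \<epsilon> h))"
  unfolding representation_iff_multiplicative
  using multiplicative_of_eps_s by (auto simp: antipode_eps_s[symmetric] pi_sum_list)

end

theorem proposition3p3: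
  fixes sc :: "'k::field \<Rightarrow> 'h::ring_1 \<Rightarrow> 'h"
    and \<Delta> :: "'h \<Rightarrow> ('h \<times> 'h) list" and \<epsilon> :: "'h \<Rightarrow> 'k" and S :: "'h \<Rightarrow> 'h"
    and scA :: "'k \<Rightarrow> 'a::ring_1 \<Rightarrow> 'a" and \<pi> :: "'h \<Rightarrow> 'a"
  assumes "weak_hopf_algebra sc \<Delta> \<epsilon> S"
    and "algebra_over scA"
    and "partial_rep sc \<Delta> S scA \<pi>"
  shows "((\<forall>h. (\<Sum>(a,b)\<leftarrow>\<Delta> h. \<pi> a * \<pi> (S b)) = \<pi> (\<Sum>(a,b)\<leftarrow>\<Delta> h. a * S b)
              \<and> \<pi> (\<Sum>(a,b)\<leftarrow>\<Delta> h. a * S b) = \<pi> (eps_t sc \<Delta> \<epsilon> h))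
          \<longleftrightarrow> (\<forall>h. (\<Sum>(a,b)\<leftarrow>\<Delta> h. \<pi> (S a) * \<pi> b) = \<pi> (\<Sum>(a,b)\<leftarrow>\<Delta> h. S a * b)
              \<and> \<pi> (\<Sum>(a,b)\<leftarrow>\<Delta> h. S a * b) = \<pi> (eps_s sc \<Delta> \<epsilon> h)))
       \<and> ((\<forall>h. (\<Sum>(a,b)\<leftarrow>\<Delta> h. \<pi> (S a) * \<pi> b) = \<pi> (\<Sum>(a,b)\<leftarrow>\<Delta> h. S a * b)
              \<and> \<pi> (\<Sum>(a,b)\<leftarrow>\<Delta> h. S a * b) = \<pi> (eps_s sc \<Delta> \<epsilon> h))
          \<longleftrightarrow> is_representation sc scA \<pi>)"
proof -
  interpret weak_hopf_partial_rep sc \<Delta> \<epsilon> S scA \<pi>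
    using assms by (intro weak_hopf_partial_rep.intro weak_hopf.intro weak_hopf_partial_rep_axioms.intro)
  show ?thesis
    using representation_iff_eps_t representation_iff_eps_s
    by (simp add: antipode_eps_t antipode_eps_s)
qed

end
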